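(* Let $A,B\in\{0,1\}^{m\times n}$ be such that $(A,B)$ is sorted-flushed. Then $cs(A)=cs(\bar B)$ if and only if $PC(A,B)$.
   Context: For $M\in\{0,1\}^{m\times n}$: $\bar M_{ij}=1-M_{ij}$; $cs(M)=(\sum_i M_{ij})_{j=1..n}$; $ars(M)=(i+\sum_j M_{ij})_{i=1..m}$; $acs(M)=(j+\sum_i M_{ij})_{j=1..n}$. $PC(A,B)$ means $\{acs(A)_1,\dots,acs(A)_n,ars(B)_1,\dots,ars(B)_m\}=\{1,\dots,m+n\}$. $M$ is bottom-left flushed if whenever $M_{ij}=1$, also $M_{i'j'}=1$ for all $i'\ge i$, $j'\le j$. The pair $(A,B)$ is sorted if $acs(A)$ and $ars(B)$ are both strictly increasing sequences; flushed if $B$ is bottom-left flushed; sorted-flushed if both. *)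

theory Defs
  imports Main
begin

(* An m x n 0/1-matrix is represented as a function M :: nat => nat => nat,
   with row indices i in {1..m}, column indices j in {1..n}; only these entries matter. *)

definition is01 :: "nat \<Rightarrow> nat \<Rightarrow> (nat \<Rightarrow> nat \<Rightarrow> nat) \<Rightarrow> bool" where
  "is01 m n M \<longleftrightarrow> (\<forall>i\<in>{1..m}. \<forall>j\<in>{1..n}. M i j \<in> {0, 1})"

definition compl :: "(nat \<Rightarrow> nat \<Rightarrow> nat) \<Rightarrow> (nat \<Rightarrow> nat \<Rightarrow> nat)" where
  "compl M = (\<lambda>i j. 1 - M i j)"

definition cs :: "nat \<Rightarrow> (nat \<Rightarrow> nat \<Rightarrow> nat) \<Rightarrow> nat \<Rightarrow> nat" where
  "cs m M j = (\<Sum>i\<in>{1..m}. M i j)"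

definition ars :: "nat \<Rightarrow> (nat \<Rightarrow> nat \<Rightarrow> nat) \<Rightarrow> nat \<Rightarrow> nat" where
  "ars n M i = i + (\<Sum>j\<in>{1..n}. M i j)"

definition acs :: "nat \<Rightarrow> (nat \<Rightarrow> nat \<Rightarrow> nat) \<Rightarrow> nat \<Rightarrow> nat" where
  "acs m M j = j + (\<Sum>i\<in>{1..m}. M i j)"

definition PC :: "nat \<Rightarrow> nat \<Rightarrow> (nat \<Rightarrow> nat \<Rightarrow> nat) \<Rightarrow> (nat \<Rightarrow> nat \<Rightarrow> nat) \<Rightarrow> bool" where
  "PC m n A B \<longleftrightarrow> acs m A ` {1..n} \<union> ars n B ` {1..m} = {1..m+n}"

definition bottom_left_flushed :: "nat \<Rightarrow> nat \<Rightarrow> (nat \<Rightarrow> nat \<Rightarrow> nat) \<Rightarrow> bool" where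
  "bottom_left_flushed m n M \<longleftrightarrow>
     (\<forall>i\<in>{1..m}. \<forall>j\<in>{1..n}. M i j = 1 \<longrightarrow>
        (\<forall>i'\<in>{1..m}. \<forall>j'\<in>{1..n}. i' \<ge> i \<longrightarrow> j' \<le> j \<longrightarrow> M i' j' = 1))"

definition sorted_pair :: "nat \<Rightarrow> nat \<Rightarrow> (nat \<Rightarrow> nat \<Rightarrow> nat) \<Rightarrow> (nat \<Rightarrow> nat \<Rightarrow> nat) \<Rightarrow> bool" where
  "sorted_pair m n A B \<longleftrightarrow> strict_mono_on {1..n} (acs m A) \<and> strict_mono_on {1..m} (ars n B)"

definition flushed_pair :: "nat \<Rightarrow> nat \<Rightarrow> (nat \<Rightarrow> nat \<Rightarrow> nat) \<Rightarrow> (nat \<Rightarrow> nat \<Rightarrow> nat) \<Rightarrow> bool" where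
  "flushed_pair m n A B \<longleftrightarrow> bottom_left_flushed m n B"

definition sorted_flushed :: "nat \<Rightarrow> nat \<Rightarrow> (nat \<Rightarrow> nat \<Rightarrow> nat) \<Rightarrow> (nat \<Rightarrow> nat \<Rightarrow> nat) \<Rightarrow> bool" where
  "sorted_flushed m n A B \<longleftrightarrow> sorted_pair m n A B \<and> flushed_pair m n A B"

end

theory Submission
  imports Defs
begin

text \<open>
  If \<open>B\<close> is bottom-left flushed, the boundary between its ones and its zeros is a
  lattice path from the top-left to the bottom-right corner, and the augmented column sums
  of the complement of \<open>B\<close> and the augmented row sums of \<open>B\<close> number its horizontal
  and vertical steps: together they partition \<open>{1..m+n}\<close>. So \<open>PC(A,B)\<close> says exactly
  that \<open>acs(A)\<close> has the same image as the augmented column sums of the complement, and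
  since both sequences are strictly increasing they then agree termwise.
\<close>

lemma strict_mono_on_image_eq:
  fixes f g :: "nat \<Rightarrow> 'a::linorder"
  assumes f: "strict_mono_on {1..n} f" and g: "strict_mono_on {1..n} g"
    and image: "f ` {1..n} = g ` {1..n}" and j: "j \<in> {1..n}"
  shows "f j = g j"
proof -
  have sorted: "sorted_wrt (<) (map h [1..<Suc n])" if "strict_mono_on {1..n} h" for h :: "nat \<Rightarrow> 'a"
    unfolding sorted_wrt_map
    by (rule sorted_wrt_mono_rel[OF _ sorted_wrt_upt]) (use that in \<open>auto simp: strict_mono_on_def\<close>)
  have "map f [1..<Suc n] = map g [1..<Suc n]"
  proof (rule sorted_distinct_set_unique)
    show "set (map f [1..<Suc n]) = set (map g [1..<Suc n])"
      using image by (simp only: set_map set_upt atLeastLessThanSuc_atLeastAtMost)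
  qed (use sorted[OF f] sorted[OF g] in \<open>simp_all only: strict_sorted_iff\<close>)
  then show ?thesis
    using j by (simp add: map_eq_conv atLeastLessThanSuc_atLeastAtMost del: upt_Suc)
qed

lemma complement_eq_iff_card_eq:
  assumes "finite U" and "X \<union> Y = U" and "X \<inter> Y = {}" and "finite Z" and "card Z = card X"
  shows "Z \<union> Y = U \<longleftrightarrow> Z = X"
proof
  assume ZY: "Z \<union> Y = U"
  have "finite X" "finite Y" using assms(1,2) by auto
  then have "card (Z \<union> Y) + card (Z \<inter> Y) = card (X \<union> Y)"
    using assms(2-5) ZY card_Un_Int[of Z Y] card_Un_disjoint[of X Y] by simp
  then have "Z \<inter> Y = {}" using ZY assms(2,4) \<open>finite Y\<close> by simp
  then show "Z = X" using ZY assms(2,3) by blast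
qed (use assms(2) in simp)

lemma sum_le_card_if_zero_outside:
  fixes f :: "'a \<Rightarrow> nat"
  assumes "finite S" and "T \<subseteq> S"
    and "\<And>x. x \<in> S \<Longrightarrow> f x \<le> 1" and "\<And>x. x \<in> S - T \<Longrightarrow> f x = 0"
  shows "sum f S \<le> card T"
proof -
  have "sum f S = sum f T"
    using assms by (intro sum.mono_neutral_right) auto
  also have "\<dots> \<le> of_nat (card T) * 1"
    using assms(2,3) by (intro sum_bounded_above) auto
  finally show ?thesis by simp
qed

lemma card_le_sum_if_one:
  fixes f :: "'a \<Rightarrow> nat"
  assumes "finite S" and "T \<subseteq> S" and "\<And>x. x \<in> T \<Longrightarrow> f x = 1"
  shows "card T \<le> sum f S"
proof -
  have "card T = sum f T" using assms(3) by simp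
  also have "\<dots> \<le> sum f S" using assms(1,2) by (rule sum_mono2) simp
  finally show ?thesis .
qed

lemma strict_mono_on_plus_sum:
  fixes f :: "'a \<Rightarrow> nat \<Rightarrow> nat"
  assumes "\<And>x r s. x \<in> S \<Longrightarrow> r \<in> {1..k} \<Longrightarrow> s \<in> {1..k} \<Longrightarrow> r < s \<Longrightarrow> f x r \<le> f x s"
  shows "strict_mono_on {1..k} (\<lambda>r. r + (\<Sum>x\<in>S. f x r))"
proof (rule strict_mono_onI)
  fix r s assume "r \<in> {1..k}" "s \<in> {1..k}" "r < s"
  then show "r + (\<Sum>x\<in>S. f x r) < s + (\<Sum>x\<in>S. f x s)"
    using assms by (intro add_less_le_mono sum_mono) auto
qed

lemma is01_cases:
  assumes "is01 m n M" and "i \<in> {1..m}" and "j \<in> {1..n}"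
  shows "M i j = 0 \<or> M i j = 1"
  using assms unfolding is01_def by blast

lemma bottom_left_flushedD:
  assumes "bottom_left_flushed m n M" and "i \<in> {1..m}" and "j \<in> {1..n}" and "M i j = 1"
    and "i' \<in> {1..m}" and "j' \<in> {1..n}" and "i \<le> i'" and "j' \<le> j"
  shows "M i' j' = 1"
  using assms unfolding bottom_left_flushed_def by blast

lemma compl_le_one: "compl M i j \<le> 1"
  by (simp add: compl_def)

context
  fixes m n :: nat and B :: "nat \<Rightarrow> nat \<Rightarrow> nat"
  assumes B01: "is01 m n B" and flushed: "bottom_left_flushed m n B"
begin

lemma flushed_strict_mono_acs_compl: "strict_mono_on {1..n} (acs m (compl B))"
proof -
  have "compl B i r \<le> compl B i s" if "i \<in> {1..m}" "r \<in> {1..n}" "s \<in> {1..n}" "r < s" for i r s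
    using is01_cases[OF B01 that(1,3)] bottom_left_flushedD[OF flushed that(1,3) _ that(1,2)] that(4)
    by (auto simp: compl_def)
  then show ?thesis
    unfolding acs_def by (rule strict_mono_on_plus_sum)
qed

lemma flushed_strict_mono_ars: "strict_mono_on {1..m} (ars n B)"
proof -
  have "B r j \<le> B s j" if "j \<in> {1..n}" "r \<in> {1..m}" "s \<in> {1..m}" "r < s" for j r s
    using is01_cases[OF B01 that(2,1)] bottom_left_flushedD[OF flushed that(2,1) _ that(3,1)] that(4)
    by fastforce
  then show ?thesis
    unfolding ars_def by (rule strict_mono_on_plus_sum)
qed

text \<open>
  At a one in cell \<open>(i,j)\<close>, column \<open>j\<close> has no zeros from row \<open>i\<close> down and row \<open>i\<close> has
  ones in columns \<open>1..j\<close>; at a zero the roles are reversed.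
\<close>

lemma flushed_acs_compl_less_ars:
  assumes i: "i \<in> {1..m}" and j: "j \<in> {1..n}" and one: "B i j = 1"
  shows "acs m (compl B) j < ars n B i"
proof -
  have "cs m (compl B) j \<le> card {1..<i}"
    unfolding cs_def
  proof (rule sum_le_card_if_zero_outside)
    fix i' assume "i' \<in> {1..m} - {1..<i}"
    then have "B i' j = 1"
      using bottom_left_flushedD[OF flushed i j one _ j] by (simp add: not_less)
    then show "compl B i' j = 0" by (simp add: compl_def)
  qed (use i compl_le_one in auto)
  moreover have "card {1..j} \<le> (\<Sum>j'\<in>{1..n}. B i j')"
    using j bottom_left_flushedD[OF flushed i j one i] by (intro card_le_sum_if_one) auto
  ultimately show ?thesis
    using i unfolding acs_def ars_def cs_def by simp linarith
qed

lemma flushed_ars_less_acs_compl: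
  assumes i: "i \<in> {1..m}" and j: "j \<in> {1..n}" and zero: "B i j = 0"
  shows "ars n B i < acs m (compl B) j"
proof -
  have zero_outside: "B i' j' = 0" if "i' \<in> {1..m}" "j' \<in> {1..n}" "i' \<le> i" "j \<le> j'" for i' j'
    using is01_cases[OF B01 that(1,2)] bottom_left_flushedD[OF flushed that(1,2) _ i j] that zero
    by auto
  have "card {1..i} \<le> cs m (compl B) j"
    unfolding cs_def
    using i j zero_outside by (intro card_le_sum_if_one) (auto simp: compl_def)
  moreover have "(\<Sum>j'\<in>{1..n}. B i j') \<le> card {1..<j}"
    using j i is01_cases[OF B01 i] zero_outside
    by (intro sum_le_card_if_zero_outside) fastforce+
  ultimately show ?thesis
    using j unfolding acs_def ars_def cs_def by simp linarith
qed

lemma flushed_acs_compl_ars_disjoint: "acs m (compl B) ` {1..n} \<inter> ars n B ` {1..m} = {}"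
proof -
  have "acs m (compl B) j \<noteq> ars n B i" if "i \<in> {1..m}" "j \<in> {1..n}" for i j
    using is01_cases[OF B01 that] flushed_acs_compl_less_ars[OF that] flushed_ars_less_acs_compl[OF that]
    by auto
  then show ?thesis by blast
qed

lemma flushed_PC_compl: "PC m n (compl B) B"
proof -
  let ?X = "acs m (compl B) ` {1..n}" and ?Y = "ars n B ` {1..m}"
  have col_le: "cs m (compl B) j \<le> m" for j
    unfolding cs_def using sum_bounded_above[of "{1..m}" "\<lambda>i. compl B i j" 1] compl_le_one
    by simp
  have X: "?X \<subseteq> {1..m+n}"
  proof (rule image_subsetI)
    fix j assume "j \<in> {1..n}"
    with col_le[of j] show "acs m (compl B) j \<in> {1..m+n}"
      by (simp add: acs_def cs_def)
  qed
  have row_le: "(\<Sum>j\<in>{1..n}. B i j) \<le> n" if "i \<in> {1..m}" for i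
    using sum_bounded_above[of "{1..n}" "\<lambda>j. B i j" 1] is01_cases[OF B01 that] by fastforce
  have Y: "?Y \<subseteq> {1..m+n}"
  proof (rule image_subsetI)
    fix i assume "i \<in> {1..m}"
    with row_le[of i] show "ars n B i \<in> {1..m+n}"
      by (simp add: ars_def)
  qed
  have "card (?X \<union> ?Y) = n + m"
    using flushed_acs_compl_ars_disjoint
      strict_mono_on_imp_inj_on[OF flushed_strict_mono_acs_compl]
      strict_mono_on_imp_inj_on[OF flushed_strict_mono_ars]
    by (simp add: card_Un_disjoint card_image)
  then show ?thesis
    unfolding PC_def using X Y by (intro card_subset_eq) auto
qed

end

theorem mainTheorem5:
  fixes m n :: nat and A B :: "nat \<Rightarrow> nat \<Rightarrow> nat"
  assumes "is01 m n A" and "is01 m n B"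
    and "sorted_flushed m n A B"
  shows "(\<forall>j\<in>{1..n}. cs m A j = cs m (compl B) j) \<longleftrightarrow> PC m n A B"
proof -
  have sorted: "strict_mono_on {1..n} (acs m A)"
    and flushed: "bottom_left_flushed m n B"
    using assms(3) by (auto simp: sorted_flushed_def sorted_pair_def flushed_pair_def)
  note acs_compl = flushed_strict_mono_acs_compl[OF assms(2) flushed]
  have "PC m n A B \<longleftrightarrow> acs m A ` {1..n} = acs m (compl B) ` {1..n}"
    unfolding PC_def
  proof (rule complement_eq_iff_card_eq)
    show "acs m (compl B) ` {1..n} \<union> ars n B ` {1..m} = {1..m + n}"
      using flushed_PC_compl[OF assms(2) flushed] by (simp only: PC_def)
    show "card (acs m A ` {1..n}) = card (acs m (compl B) ` {1..n})"
      using strict_mono_on_imp_inj_on[OF sorted] strict_mono_on_imp_inj_on[OF acs_compl]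
      by (simp add: card_image)
  qed (use flushed_acs_compl_ars_disjoint[OF assms(2) flushed] in simp_all)
  also have "\<dots> \<longleftrightarrow> (\<forall>j\<in>{1..n}. acs m A j = acs m (compl B) j)"
    using strict_mono_on_image_eq[OF sorted acs_compl] by (auto intro: image_cong)
  also have "\<dots> \<longleftrightarrow> (\<forall>j\<in>{1..n}. cs m A j = cs m (compl B) j)"
    by (simp add: acs_def cs_def)
  finally show ?thesis by simp
qed

end
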